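(* The flow rewriting system $\mathsf w$ is terminating: there is no infinite chain of atomic flows $A_1\to_{\mathsf w}A_2\to_{\mathsf w}\cdots$.
   Context: An atomic flow is a tuple $(V,E,\eta,up,lo)$: finite sets of vertices $V$ and edges $E$, a labelling $\eta$ of vertices by interaction, cut, weakening, coweakening, contraction or cocontraction, and maps $up:E\to V\cup\{\top\}$, $lo:E\to V\cup\{\bot\}$ ($\top,\bot\notin V$). Upper edges of $\nu$: those with $lo(\epsilon)=\nu$; lower edges: those with $up(\epsilon)=\nu$. The (upper, lower) edge numbers are $(0,2)$ interaction, $(2,0)$ cut, $(0,1)$ weakening, $(1,0)$ coweakening, $(2,1)$ contraction, $(1,2)$ cocontraction; the directed graph has no directed cycle; and there is a map $\pi:E\to\{+,-\}$ giving all edges of each (co)contraction the same sign and the two edges of each interaction/cut different signs. $A\to_{\mathsf w}B$ means $B$ is obtained from $A$ by one application of one of the following rules, each replacing a subgraph (everything else unchanged): (i) a weakening whose lower edge is an upper edge of a contraction: delete both, merging the contraction's other upper edge and its lower edge into one edge; (ii) a coweakening whose upper edge is a lower edge of a cocontraction: delete both, merging the cocontraction's upper edge and its other lower edge; (iii) a weakening whose lower edge is an upper edge of a cut: delete both, and the cut's other upper edge becomes the upper edge of a new coweakening; (iv) an interaction one of whose lower edges is the upper edge of a coweakening: delete both, and the interaction's other lower edge becomes the lower edge of a new weakening; (v) an edge from a weakening to a coweakening: delete the edge and both vertices; (vi) a weakening whose lower edge is the upper edge of a cocontraction: replace by two new weakenings whose lower edges are the cocontraction's two lower edges; (vii) a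 coweakening whose upper edge is the lower edge of a contraction: replace by two new coweakenings whose upper edges are the contraction's two upper edges. *)

theory Defs
  imports Main
begin

datatype kind = Inter | Cut | Weak | Coweak | Contr | Cocontr

text \<open>Endpoints of edges: a vertex, or the special points Top / Bot (not vertices).\<close>
datatype 'v pt = Top | Bot | Vx 'v

record ('v, 'e) flow =
  fV  :: "'v set"
  fE  :: "'e set"
  eta :: "'v \<Rightarrow> kind"
  up  :: "'e \<Rightarrow> 'v pt"
  lo  :: "'e \<Rightarrow> 'v pt"

fun upper_num :: "kind \<Rightarrow> nat" where
  "upper_num Inter = 0" | "upper_num Cut = 2" | "upper_num Weak = 0"
| "upper_num Coweak = 1" | "upper_num Contr = 2" | "upper_num Cocontr = 1"

fun lower_num :: "kind \<Rightarrow> nat" where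
  "lower_num Inter = 2" | "lower_num Cut = 0" | "lower_num Weak = 1"
| "lower_num Coweak = 0" | "lower_num Contr = 1" | "lower_num Cocontr = 2"

definition flow_graph :: "('v, 'e) flow \<Rightarrow> ('v \<times> 'v) set" where
  "flow_graph A = {(u, v). \<exists>e\<in>fE A. up A e = Vx u \<and> lo A e = Vx v}"

definition incident :: "('v, 'e) flow \<Rightarrow> 'v \<Rightarrow> 'e \<Rightarrow> bool" where
  "incident A v e \<longleftrightarrow> up A e = Vx v \<or> lo A e = Vx v"

definition atomic_flow :: "('v, 'e) flow \<Rightarrow> bool" where
  "atomic_flow A \<longleftrightarrow>
     finite (fV A) \<and> finite (fE A) \<and>
     (\<forall>e\<in>fE A. (up A e = Top \<or> (\<exists>v\<in>fV A. up A e = Vx v)) \<and>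
                (lo A e = Bot \<or> (\<exists>v\<in>fV A. lo A e = Vx v))) \<and>
     (\<forall>v\<in>fV A. card {e\<in>fE A. lo A e = Vx v} = upper_num (eta A v) \<and>
                card {e\<in>fE A. up A e = Vx v} = lower_num (eta A v)) \<and>
     acyclic (flow_graph A) \<and>
     (\<exists>\<pi> :: 'e \<Rightarrow> bool. \<forall>v\<in>fV A.
        (eta A v \<in> {Contr, Cocontr} \<longrightarrow>
           (\<forall>e\<in>fE A. \<forall>e'\<in>fE A. incident A v e \<and> incident A v e' \<longrightarrow> \<pi> e = \<pi> e')) \<and>
        (eta A v \<in> {Inter, Cut} \<longrightarrow>
           (\<forall>e\<in>fE A. \<forall>e'\<in>fE A. incident A v e \<and> incident A v e' \<and> e \<noteq> e' \<longrightarrow> \<pi> e \<noteq> \<pi> e')))"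

definition flow_iso :: "('v, 'e) flow \<Rightarrow> ('v, 'e) flow \<Rightarrow> bool" where
  "flow_iso A B \<longleftrightarrow> (\<exists>f g. bij_betw f (fV A) (fV B) \<and> bij_betw g (fE A) (fE B) \<and>
     (\<forall>v\<in>fV A. eta B (f v) = eta A v) \<and>
     (\<forall>e\<in>fE A. up B (g e) = map_pt f (up A e) \<and> lo B (g e) = map_pt f (lo A e)))"

text \<open>The seven rewrite rules, each producing one concrete representative of the result
  (merged edges keep the name of one of the merged edges; new (co)weakenings reuse names of
  deleted vertices).\<close>
inductive w_raw :: "('v, 'e) flow \<Rightarrow> ('v, 'e) flow \<Rightarrow> bool" where
  rule_i: "\<lbrakk> w \<in> fV A; c \<in> fV A; eta A w = Weak; eta A c = Contr;
            e \<in> fE A; up A e = Vx w; lo A e = Vx c;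
            e1 \<in> fE A; e1 \<noteq> e; lo A e1 = Vx c; e2 \<in> fE A; up A e2 = Vx c \<rbrakk>
          \<Longrightarrow> w_raw A (A\<lparr>fV := fV A - {w, c}, fE := fE A - {e, e2},
                        lo := (lo A)(e1 := lo A e2)\<rparr>)"
| rule_ii: "\<lbrakk> k \<in> fV A; d \<in> fV A; eta A k = Coweak; eta A d = Cocontr;
            e \<in> fE A; up A e = Vx d; lo A e = Vx k;
            e1 \<in> fE A; lo A e1 = Vx d; e2 \<in> fE A; e2 \<noteq> e; up A e2 = Vx d \<rbrakk>
          \<Longrightarrow> w_raw A (A\<lparr>fV := fV A - {k, d}, fE := fE A - {e, e2},
                        lo := (lo A)(e1 := lo A e2)\<rparr>)"
| rule_iii: "\<lbrakk> w \<in> fV A; c \<in> fV A; eta A w = Weak; eta A c = Cut;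
            e \<in> fE A; up A e = Vx w; lo A e = Vx c \<rbrakk>
          \<Longrightarrow> w_raw A (A\<lparr>fV := fV A - {w}, fE := fE A - {e},
                        eta := (eta A)(c := Coweak)\<rparr>)"
| rule_iv: "\<lbrakk> i \<in> fV A; k \<in> fV A; eta A i = Inter; eta A k = Coweak;
            e \<in> fE A; up A e = Vx i; lo A e = Vx k \<rbrakk>
          \<Longrightarrow> w_raw A (A\<lparr>fV := fV A - {k}, fE := fE A - {e},
                        eta := (eta A)(i := Weak)\<rparr>)"
| rule_v: "\<lbrakk> w \<in> fV A; k \<in> fV A; eta A w = Weak; eta A k = Coweak;
            e \<in> fE A; up A e = Vx w; lo A e = Vx k \<rbrakk>
          \<Longrightarrow> w_raw A (A\<lparr>fV := fV A - {w, k}, fE := fE A - {e}\<rparr>)"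
| rule_vi: "\<lbrakk> w \<in> fV A; d \<in> fV A; eta A w = Weak; eta A d = Cocontr;
            e \<in> fE A; up A e = Vx w; lo A e = Vx d;
            e1 \<in> fE A; e2 \<in> fE A; e1 \<noteq> e2; up A e1 = Vx d; up A e2 = Vx d \<rbrakk>
          \<Longrightarrow> w_raw A (A\<lparr>fE := fE A - {e}, eta := (eta A)(d := Weak),
                        up := (up A)(e1 := Vx w)\<rparr>)"
| rule_vii: "\<lbrakk> k \<in> fV A; c \<in> fV A; eta A k = Coweak; eta A c = Contr;
            e \<in> fE A; up A e = Vx c; lo A e = Vx k;
            e1 \<in> fE A; e2 \<in> fE A; e1 \<noteq> e2; lo A e1 = Vx c; lo A e2 = Vx c \<rbrakk>
          \<Longrightarrow> w_raw A (A\<lparr>fE := fE A - {e}, eta := (eta A)(c := Coweak),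
                        lo := (lo A)(e1 := Vx k)\<rparr>)"

definition w_step :: "('v, 'e) flow \<Rightarrow> ('v, 'e) flow \<Rightarrow> bool" where
  "w_step A B \<longleftrightarrow> (\<exists>B'. w_raw A B' \<and> flow_iso B' B)"

end

theory Submission
  imports Defs
begin

text \<open>Each of the seven rules deletes the edge joining the two vertices it acts on and creates
  no new edge, and isomorphic flows have equally many edges; so the number of edges strictly
  decreases along every step, which is impossible infinitely often.\<close>

lemma w_raw_edges_psubset: "w_raw A B \<Longrightarrow> fE B \<subset> fE A"
  by (induction rule: w_raw.induct) auto

lemma flow_iso_card_edges: "flow_iso A B \<Longrightarrow> card (fE B) = card (fE A)"
  unfolding flow_iso_def by (metis bij_betw_same_card)

lemma w_step_card_edges_less:
  assumes "w_step A B" and "finite (fE A)"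
  shows "card (fE B) < card (fE A)"
proof -
  obtain B' where raw: "w_raw A B'" and iso: "flow_iso B' B"
    using assms(1) unfolding w_step_def by blast
  have "card (fE B') < card (fE A)"
    using psubset_card_mono[OF assms(2) w_raw_edges_psubset[OF raw]] .
  with flow_iso_card_edges[OF iso] show ?thesis by simp
qed

theorem theorem4p12:
  shows "\<not> (\<exists>F :: nat \<Rightarrow> ('v, 'e) flow. \<forall>i. atomic_flow (F i) \<and> w_step (F i) (F (Suc i)))"
proof
  assume "\<exists>F :: nat \<Rightarrow> ('v, 'e) flow. \<forall>i. atomic_flow (F i) \<and> w_step (F i) (F (Suc i))"
  then obtain F :: "nat \<Rightarrow> ('v, 'e) flow"
    where chain: "\<And>i. atomic_flow (F i) \<and> w_step (F i) (F (Suc i))"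
    by blast
  obtain k where "(F (Suc k), F k) \<notin> measure (card \<circ> fE)"
    using wf_no_infinite_down_chainE[OF wf_measure] .
  moreover have "card (fE (F (Suc k))) < card (fE (F k))"
    using chain[of k] w_step_card_edges_less unfolding atomic_flow_def by blast
  ultimately show False by simp
qed

end
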